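(* Let $\mathcal K$ (UAVs) and $\mathcal I$ (subscribers) be finite sets. Fix $\sigma^2>0$, channel gains $h_{ij}>0$ ($i\in\mathcal I$, $j\in\mathcal K$), association indicators $c_{ik}\in\{0,1\}$ with $\sum_{k}c_{ik}\le1$ for all $i$ and $\sum_i c_{ik}\le 1$ for all $k$, constants $L>0$, $B>0$, $V\rho_1\ge 0$, nonnegative weights $a_i$ ($i\in\mathcal I$) and $w_k$ ($k\in\mathcal K$), and power bounds $0\le p^{\min}_k$, $p^c_k\ge 0$, $\hat p_k$. For $p=(p_k)_{k\in\mathcal K}$ let $$r_i(p)=\sum_{k\in\mathcal K}c_{ik}\log_2\Big(1+\frac{p_kh_{ik}}{\sigma^2+\sum_{j\in\mathcal K\setminus\{k\}}p_jh_{ij}}\Big),$$ and let $\mathcal F=\{p:\ p^{\min}_k\le p_k\le \hat p_k-p^c_k\ \forall k\}$. Problem (P): minimize over $p\in\mathcal F$ the function $\Phi(p)=\sum_{k}w_kp_k+V\rho_1\sum_{i}\frac{L}{B\,r_i(p)}-\sum_i a_i r_i(p)$ (with $L/(B\cdot 0)=+\infty$); let $\mathrm{OPT}_P=\inf_{p\in\mathcal F}\Phi(p)$. Fix a local point $p^{(r)}\ge 0$ and define $\hat\Lambda_i(p)=\log_2(\sigma^2+\sum_{j}p_jh_{ij})$, $F^{(r)}_{ik}=\log_2(\sigma^2+\sum_{j\ne k}p^{(r)}_jh_{ij})$, $G^{(r)}_{ikj}=h_{ij}/\big((\sigma^2+\sum_{l\ne k}p^{(r)}_lh_{il})\ln2\big)$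 for $j\ne k$. Problem (C): maximize over $(p,\xi,\eta)$, $\xi=(\xi_i)_{i\in\mathcal I}$, $\eta=(\eta_i)_{i\in\mathcal I}$, the objective $-\sum_k w_kp_k+\sum_i a_i\eta_i-V\rho_1\sum_i\xi_i$ subject to: $p\in\mathcal F$; $\xi_i\ge0,\ \eta_i\ge 0$ and $\xi_i\eta_i\ge L/B$ for all $i$; and for all $i$, $$\sum_{k}c_{ik}\big(\hat\Lambda_i(p)-F^{(r)}_{ik}\big)-\sum_k c_{ik}\sum_{j\ne k}G^{(r)}_{ikj}(p_j-p^{(r)}_j)\ge\eta_i .$$ Let $\mathrm{OPT}_C$ be the supremum of the objective of (C) over its feasible set ($-\infty$ if infeasible). Then $\mathrm{OPT}_P\le -\mathrm{OPT}_C$, i.e., the negative of the optimal value of (C) is an upper bound on the optimal value of (P).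
   Context: Problem (P) is the per-slot UAV transmit-power subproblem of a Lyapunov drift-plus-penalty scheme for multi-UAV video transmission: in the paper $w_k=V\rho_2+[Y_k(t)]^+$ and $a_i=[X_i(t)]^++[Z_i(t)]^+$ with $V,\rho_1,\rho_2\ge0$ and $[x]^+=\max\{x,0\}$, $L$ is the video data length per slot and $B$ the bandwidth; $r_i(p)$ is the achievable rate of subscriber $i$ under the fixed association $c$ and fixed UAV positions (encoded in $h_{ij}$). *)

theory Defs
  imports "HOL-Analysis.Analysis"
begin

definition rate ::
  "'k set \<Rightarrow> real \<Rightarrow> ('i \<Rightarrow> 'k \<Rightarrow> real) \<Rightarrow> ('i \<Rightarrow> 'k \<Rightarrow> real) \<Rightarrow> ('k \<Rightarrow> real) \<Rightarrow> 'i \<Rightarrow> real"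
  where "rate K sigma2 h c p i =
     (\<Sum>k\<in>K. c i k * log 2 (1 + p k * h i k / (sigma2 + (\<Sum>j\<in>K - {k}. p j * h i j))))"

definition feasP :: "'k set \<Rightarrow> ('k \<Rightarrow> real) \<Rightarrow> ('k \<Rightarrow> real) \<Rightarrow> ('k \<Rightarrow> real) \<Rightarrow> ('k \<Rightarrow> real) set"
  where "feasP K pmin phat pc = {p. \<forall>k\<in>K. pmin k \<le> p k \<and> p k \<le> phat k - pc k}"

definition delay_term :: "real \<Rightarrow> real \<Rightarrow> real \<Rightarrow> ereal"
  where "delay_term L B r = (if r = 0 then \<infinity> else ereal (L / (B * r)))"

definition PhiP ::
  "'k set \<Rightarrow> 'i set \<Rightarrow> real \<Rightarrow> ('i \<Rightarrow> 'k \<Rightarrow> real) \<Rightarrow> ('i \<Rightarrow> 'k \<Rightarrow> real) \<Rightarrow> real \<Rightarrow> real \<Rightarrow> real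
   \<Rightarrow> ('i \<Rightarrow> real) \<Rightarrow> ('k \<Rightarrow> real) \<Rightarrow> ('k \<Rightarrow> real) \<Rightarrow> ereal"
  where "PhiP K I sigma2 h c L B Vrho1 a w p =
     ereal (\<Sum>k\<in>K. w k * p k)
     + ereal Vrho1 * (\<Sum>i\<in>I. delay_term L B (rate K sigma2 h c p i))
     - ereal (\<Sum>i\<in>I. a i * rate K sigma2 h c p i)"

definition OPT_P where
  "OPT_P K I sigma2 h c L B Vrho1 a w pmin phat pc =
     (INF p\<in>feasP K pmin phat pc. PhiP K I sigma2 h c L B Vrho1 a w p)"

definition feasC ::
  "'k set \<Rightarrow> 'i set \<Rightarrow> real \<Rightarrow> ('i \<Rightarrow> 'k \<Rightarrow> real) \<Rightarrow> ('i \<Rightarrow> 'k \<Rightarrow> real) \<Rightarrow> real \<Rightarrow> real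
   \<Rightarrow> ('k \<Rightarrow> real) \<Rightarrow> ('k \<Rightarrow> real) \<Rightarrow> ('k \<Rightarrow> real) \<Rightarrow> ('k \<Rightarrow> real)
   \<Rightarrow> (('k \<Rightarrow> real) \<times> ('i \<Rightarrow> real) \<times> ('i \<Rightarrow> real)) set"
  where "feasC K I sigma2 h c L B pmin phat pc pr =
     {(p, xi, eta). p \<in> feasP K pmin phat pc \<and>
        (\<forall>i\<in>I. xi i \<ge> 0 \<and> eta i \<ge> 0 \<and> xi i * eta i \<ge> L / B) \<and>
        (\<forall>i\<in>I.
          (\<Sum>k\<in>K. c i k * (log 2 (sigma2 + (\<Sum>j\<in>K. p j * h i j))
                              - log 2 (sigma2 + (\<Sum>j\<in>K - {k}. pr j * h i j))))
          - (\<Sum>k\<in>K. c i k * (\<Sum>j\<in>K - {k}.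
                 h i j / ((sigma2 + (\<Sum>l\<in>K - {k}. pr l * h i l)) * ln 2) * (p j - pr j)))
          \<ge> eta i)}"

definition objC ::
  "'k set \<Rightarrow> 'i set \<Rightarrow> real \<Rightarrow> ('i \<Rightarrow> real) \<Rightarrow> ('k \<Rightarrow> real)
   \<Rightarrow> ('k \<Rightarrow> real) \<times> ('i \<Rightarrow> real) \<times> ('i \<Rightarrow> real) \<Rightarrow> real"
  where "objC K I Vrho1 a w x = (case x of (p, xi, eta) \<Rightarrow>
     - (\<Sum>k\<in>K. w k * p k) + (\<Sum>i\<in>I. a i * eta i) - Vrho1 * (\<Sum>i\<in>I. xi i))"

text \<open>Supremum in the extended reals; Sup {} = -infinity for an infeasible problem.\<close>
definition OPT_C where
  "OPT_C K I sigma2 h c L B Vrho1 a w pmin phat pc pr =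
     (SUP x\<in>feasC K I sigma2 h c L B pmin phat pc pr. ereal (objC K I Vrho1 a w x))"

end

theory Submission
  imports Defs
begin

text \<open>
  Fix a feasible point \<open>(p, \<xi>, \<eta>)\<close> of (C). With \<open>A\<close> the noise-plus-interference seen by
  link \<open>k\<close> of subscriber \<open>i\<close>, its rate is \<open>log\<^sub>2 (A + signal) - log\<^sub>2 A\<close>; since \<open>log\<^sub>2\<close> is
  concave, replacing \<open>log\<^sub>2 A\<close> by its tangent at the local point lowers the rate, and the
  result is exactly the left-hand side of the rate constraint of (C). Hence \<open>\<eta>\<^sub>i \<le> r\<^sub>i(p)\<close>,
  so \<open>\<eta>\<^sub>i > 0\<close> and \<open>\<xi>\<^sub>i \<ge> L/(B \<eta>\<^sub>i) \<ge> L/(B r\<^sub>i(p))\<close>, and \<open>\<Phi>(p)\<close> is at most minus the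
  objective of (C) at that point.
\<close>

definition rate_minorant ::
  "'k set \<Rightarrow> real \<Rightarrow> ('i \<Rightarrow> 'k \<Rightarrow> real) \<Rightarrow> ('i \<Rightarrow> 'k \<Rightarrow> real) \<Rightarrow> ('k \<Rightarrow> real) \<Rightarrow> ('k \<Rightarrow> real) \<Rightarrow> 'i \<Rightarrow> real"
  where "rate_minorant K sigma2 h c pr p i =
     (\<Sum>k\<in>K. c i k * (log 2 (sigma2 + (\<Sum>j\<in>K. p j * h i j))
                         - log 2 (sigma2 + (\<Sum>j\<in>K - {k}. pr j * h i j))))
     - (\<Sum>k\<in>K. c i k * (\<Sum>j\<in>K - {k}.
            h i j / ((sigma2 + (\<Sum>l\<in>K - {k}. pr l * h i l)) * ln 2) * (p j - pr j)))"

lemma feasC_eq_rate_minorant: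
  "feasC K I sigma2 h c L B pmin phat pc pr =
     {(p, xi, eta). p \<in> feasP K pmin phat pc \<and>
        (\<forall>i\<in>I. xi i \<ge> 0 \<and> eta i \<ge> 0 \<and> xi i * eta i \<ge> L / B) \<and>
        (\<forall>i\<in>I. rate_minorant K sigma2 h c pr p i \<ge> eta i)}"
  unfolding feasC_def rate_minorant_def ..

lemma log_diff_le_tangent:
  fixes b x x0 :: real
  assumes "1 < b" "0 < x" "0 < x0"
  shows "log b x - log b x0 \<le> (x - x0) / (x0 * ln b)"
proof -
  have "ln x - ln x0 = ln (x / x0)" using assms by (simp add: ln_div)
  also have "\<dots> \<le> x / x0 - 1" using assms by (intro ln_le_minus_one) auto
  also have "\<dots> = (x - x0) / x0" using assms by (simp add: field_simps)
  finally have ln_bound: "ln x - ln x0 \<le> (x - x0) / x0" .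
  have "log b x - log b x0 = (ln x - ln x0) / ln b"
    by (simp add: log_def diff_divide_distrib)
  also have "\<dots> \<le> ((x - x0) / x0) / ln b"
    using assms ln_bound by (intro divide_right_mono) auto
  finally show ?thesis by simp
qed

lemma log_sinr_ge_linearization:
  fixes K :: "'k set" and p q g :: "'k \<Rightarrow> real" and s :: real
  assumes "finite K" "k \<in> K" "0 < s"
    and "\<forall>j\<in>K. 0 < g j" "\<forall>j\<in>K. 0 \<le> p j" "\<forall>j\<in>K. 0 \<le> q j"
  shows "log 2 (s + (\<Sum>j\<in>K. p j * g j)) - log 2 (s + (\<Sum>j\<in>K - {k}. q j * g j))
       - (\<Sum>j\<in>K - {k}. g j / ((s + (\<Sum>l\<in>K - {k}. q l * g l)) * ln 2) * (p j - q j))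
     \<le> log 2 (1 + p k * g k / (s + (\<Sum>j\<in>K - {k}. p j * g j)))"
proof -
  define A where "A = s + (\<Sum>j\<in>K - {k}. p j * g j)"
  define A0 where "A0 = s + (\<Sum>j\<in>K - {k}. q j * g j)"
  have "0 \<le> (\<Sum>j\<in>K - {k}. p j * g j)" "0 \<le> (\<Sum>j\<in>K - {k}. q j * g j)"
    using assms by (auto intro!: sum_nonneg simp: less_imp_le)
  then have A_pos: "0 < A" and A0_pos: "0 < A0"
    using \<open>0 < s\<close> unfolding A_def A0_def by linarith+
  have signal_nonneg: "0 \<le> p k * g k"
    using assms by (simp add: less_imp_le)
  have total: "s + (\<Sum>j\<in>K. p j * g j) = A + p k * g k"
    unfolding A_def using assms by (simp add: sum.remove)
  have tangent: "(\<Sum>j\<in>K - {k}. g j / (A0 * ln 2) * (p j - q j)) = (A - A0) / (A0 * ln 2)"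
    unfolding A_def A0_def
    by (simp add: sum_divide_distrib[symmetric] sum_subtractf[symmetric] algebra_simps)
  have "log 2 (1 + p k * g k / A) = log 2 ((A + p k * g k) / A)"
    using A_pos by (simp add: field_simps)
  also have "\<dots> = log 2 (A + p k * g k) - log 2 A"
    using A_pos signal_nonneg by (simp add: log_divide)
  finally have rate: "log 2 (1 + p k * g k / A) = log 2 (A + p k * g k) - log 2 A" .
  show ?thesis
    using log_diff_le_tangent[OF _ A_pos A0_pos, of 2]
    unfolding A_def[symmetric] A0_def[symmetric] total tangent rate by simp
qed

lemma rate_minorant_le_rate:
  assumes "finite K" "0 < sigma2"
    and "\<forall>j\<in>K. 0 < h i j" "\<forall>k\<in>K. 0 \<le> c i k"
    and "\<forall>j\<in>K. 0 \<le> p j" "\<forall>j\<in>K. 0 \<le> pr j"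
  shows "rate_minorant K sigma2 h c pr p i \<le> rate K sigma2 h c p i"
proof -
  have "rate_minorant K sigma2 h c pr p i =
      (\<Sum>k\<in>K. c i k * (log 2 (sigma2 + (\<Sum>j\<in>K. p j * h i j))
                         - log 2 (sigma2 + (\<Sum>j\<in>K - {k}. pr j * h i j))
          - (\<Sum>j\<in>K - {k}.
              h i j / ((sigma2 + (\<Sum>l\<in>K - {k}. pr l * h i l)) * ln 2) * (p j - pr j))))"
    unfolding rate_minorant_def by (simp add: right_diff_distrib sum_subtractf)
  also have "\<dots> \<le> rate K sigma2 h c p i"
    unfolding rate_def
    using assms log_sinr_ge_linearization[OF assms(1) _ assms(2), where g = "h i" and p = p and q = pr]
    by (intro sum_mono mult_left_mono) auto
  finally show ?thesis .
qed

lemma delay_term_le: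
  assumes "0 < L" "0 < B" "0 \<le> xi" "0 \<le> eta" "L / B \<le> xi * eta" "eta \<le> r"
  shows "delay_term L B r \<le> ereal xi"
proof -
  have "0 < xi * eta" using assms divide_pos_pos[of L B] by linarith
  then have "0 < eta" using assms by (auto simp: zero_less_mult_iff)
  then have r_pos: "0 < r" using assms by linarith
  have "L / B \<le> xi * r"
    using assms by (meson mult_left_mono order_trans)
  then have "L / (B * r) \<le> xi"
    using r_pos \<open>0 < B\<close> by (simp add: field_simps)
  then show ?thesis
    using r_pos unfolding delay_term_def by simp
qed

lemma PhiP_le_uminus_objC:
  assumes "finite K" "0 < sigma2" "\<forall>i\<in>I. \<forall>j\<in>K. 0 < h i j" "\<forall>i\<in>I. \<forall>k\<in>K. 0 \<le> c i k"
    and "0 < L" "0 < B" "0 \<le> Vrho1" "\<forall>i\<in>I. 0 \<le> a i"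
    and "\<forall>k\<in>K. 0 \<le> pmin k" "\<forall>k\<in>K. 0 \<le> pr k"
    and feasible: "(p, xi, eta) \<in> feasC K I sigma2 h c L B pmin phat pc pr"
  shows "PhiP K I sigma2 h c L B Vrho1 a w p \<le> ereal (- objC K I Vrho1 a w (p, xi, eta))"
proof -
  let ?r = "rate K sigma2 h c p"
  have "p \<in> feasP K pmin phat pc"
    and xi_eta: "\<forall>i\<in>I. 0 \<le> xi i \<and> 0 \<le> eta i \<and> L / B \<le> xi i * eta i"
    and minorant: "\<forall>i\<in>I. eta i \<le> rate_minorant K sigma2 h c pr p i"
    using feasible unfolding feasC_eq_rate_minorant by auto
  then have "\<forall>j\<in>K. 0 \<le> p j"
    using assms(9) unfolding feasP_def by force
  then have eta_le_rate: "eta i \<le> ?r i" if "i \<in> I" for i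
    using that assms minorant rate_minorant_le_rate[of K sigma2 h i c p pr] by force
  have "delay_term L B (?r i) \<le> ereal (xi i)" if "i \<in> I" for i
    using delay_term_le[OF assms(5,6), of "xi i" "eta i"] xi_eta eta_le_rate that by blast
  then have "(\<Sum>i\<in>I. delay_term L B (?r i)) \<le> (\<Sum>i\<in>I. ereal (xi i))"
    by (rule sum_mono)
  then have delay:
    "ereal Vrho1 * (\<Sum>i\<in>I. delay_term L B (?r i)) \<le> ereal Vrho1 * ereal (\<Sum>i\<in>I. xi i)"
    using assms(7) by (intro ereal_mult_left_mono) simp_all
  have gain: "(\<Sum>i\<in>I. a i * eta i) \<le> (\<Sum>i\<in>I. a i * ?r i)"
    using assms(8) eta_le_rate by (intro sum_mono mult_left_mono) auto
  have "PhiP K I sigma2 h c L B Vrho1 a w p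
      \<le> ereal (\<Sum>k\<in>K. w k * p k) + ereal Vrho1 * ereal (\<Sum>i\<in>I. xi i)
          - ereal (\<Sum>i\<in>I. a i * eta i)"
    unfolding PhiP_def using delay gain by (intro ereal_minus_mono add_left_mono) auto
  then show ?thesis
    by (simp add: objC_def algebra_simps)
qed

lemma INF_le_uminus_SUP:
  fixes f g :: "_ \<Rightarrow> ereal"
  assumes "\<And>x. x \<in> C \<Longrightarrow> \<exists>y\<in>F. f y \<le> - g x"
  shows "(INF y\<in>F. f y) \<le> - (SUP x\<in>C. g x)"
proof -
  have "(INF y\<in>F. f y) \<le> (INF x\<in>C. - g x)"
    using assms by (meson INF_greatest INF_lower2)
  then show ?thesis
    by (simp add: ereal_INF_uminus_eq)
qed

theorem lemma1:
  fixes K :: "'k set" and I :: "'i set"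
    and sigma2 L B Vrho1 :: real
    and h c :: "'i \<Rightarrow> 'k \<Rightarrow> real"
    and a :: "'i \<Rightarrow> real" and w pmin pc phat pr :: "'k \<Rightarrow> real"
  assumes "finite K" and "finite I"
    and "sigma2 > 0"
    and "\<forall>i\<in>I. \<forall>j\<in>K. h i j > 0"
    and "\<forall>i\<in>I. \<forall>k\<in>K. c i k \<in> {0, 1}"
    and "\<forall>i\<in>I. (\<Sum>k\<in>K. c i k) \<le> 1"
    and "\<forall>k\<in>K. (\<Sum>i\<in>I. c i k) \<le> 1"
    and "L > 0" and "B > 0" and "Vrho1 \<ge> 0"
    and "\<forall>i\<in>I. a i \<ge> 0" and "\<forall>k\<in>K. w k \<ge> 0"
    and "\<forall>k\<in>K. pmin k \<ge> 0" and "\<forall>k\<in>K. pc k \<ge> 0"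
    and "\<forall>k\<in>K. pr k \<ge> 0"
  shows "OPT_P K I sigma2 h c L B Vrho1 a w pmin phat pc
         \<le> - OPT_C K I sigma2 h c L B Vrho1 a w pmin phat pc pr"
  unfolding OPT_P_def OPT_C_def
proof (rule INF_le_uminus_SUP)
  fix x
  assume feasible: "x \<in> feasC K I sigma2 h c L B pmin phat pc pr"
  obtain p xi eta where x: "x = (p, xi, eta)"
    by (cases x) auto
  have c_nonneg: "\<forall>i\<in>I. \<forall>k\<in>K. 0 \<le> c i k"
    using assms(5) by fastforce
  have "p \<in> feasP K pmin phat pc"
    using feasible unfolding x feasC_eq_rate_minorant by auto
  moreover have "PhiP K I sigma2 h c L B Vrho1 a w p \<le> - ereal (objC K I Vrho1 a w x)"
    using PhiP_le_uminus_objC[OF assms(1,3,4) c_nonneg assms(8-11,13,15)] feasible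
    unfolding x by simp
  ultimately show "\<exists>p\<in>feasP K pmin phat pc.
      PhiP K I sigma2 h c L B Vrho1 a w p \<le> - ereal (objC K I Vrho1 a w x)" by blast
qed

end
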